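(* For every $\mu\in[0,\infty)$ and every $z\in\mathbb{C}$ not in the spectrum of $F(\mu)$, with $D(z,\mu)=\det(zI-F(\mu))$, $$|D(z,\mu)|^{-2}(2|z|^2+1)-\frac{2}{2|z|^2+1}\le\|(zI-F(\mu))^{-1}\|^2\le|D(z,\mu)|^{-2}(2|z|^2+1),$$ where $\|\cdot\|$ is the operator norm on $\mathbb{C}^2$ with the standard Hermitian norm.
   Context: For $\mu\in[0,\infty)$, $F(\mu)=\begin{bmatrix}0&F_{+-}(\mu)\\ F_{-+}(\mu)&0\end{bmatrix}$ with $F_{+-}(\mu)=\frac{1}{\sqrt{2\pi}}e^{i\pi/4}e^{-\pi\mu/2}\Gamma(\tfrac12+i\mu)$ and $F_{-+}(\mu)=\frac{1}{\sqrt{2\pi}}e^{i\pi/4}e^{\pi\mu/2}\Gamma(\tfrac12-i\mu)$, where $\Gamma$ is Euler's Gamma function; $I$ is the $2\times2$ identity matrix. *)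

theory Defs
  imports "HOL-Analysis.Analysis"
begin

definition Fpm :: "real \<Rightarrow> complex" where
  "Fpm \<mu> = complex_of_real (1 / sqrt (2 * pi)) * exp (\<i> * complex_of_real (pi / 4))
            * complex_of_real (exp (- pi * \<mu> / 2)) * Gamma (1/2 + \<i> * complex_of_real \<mu>)"

definition Fmp :: "real \<Rightarrow> complex" where
  "Fmp \<mu> = complex_of_real (1 / sqrt (2 * pi)) * exp (\<i> * complex_of_real (pi / 4))
            * complex_of_real (exp (pi * \<mu> / 2)) * Gamma (1/2 - \<i> * complex_of_real \<mu>)"

definition Fmat :: "real \<Rightarrow> complex^2^2" where
  "Fmat \<mu> = (\<chi> i j. if i = 1 \<and> j = 2 then Fpm \<mu>
                     else if i = 2 \<and> j = 1 then Fmp \<mu> else 0)"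

definition mat_spectrum :: "complex^'n^'n \<Rightarrow> complex set" where
  "mat_spectrum A = {z. \<not> invertible (mat z - A)}"

definition Dfun :: "complex \<Rightarrow> real \<Rightarrow> complex" where
  "Dfun z \<mu> = det (mat z - Fmat \<mu>)"

end

theory Submission
  imports Defs
begin

(*
  The entries of F(mu) satisfy |F_{+-}|^2 + |F_{-+}|^2 = 1: by the reflection formula
  |Gamma(1/2 + i mu)|^2 = pi / cosh(pi mu), and the exponential prefactors e^{-+pi mu/2}
  turn the two squares into e^{-+pi mu} / (2 cosh(pi mu)). Hence zI - F(mu) has squared
  Frobenius norm 2|z|^2 + 1 and determinant D, so its inverse has squared Frobenius norm
  (2|z|^2 + 1) / |D|^2 and determinant 1/D. For a 2x2 matrix N with singular values
  s1 >= s2 one has ||N||^2 = s1^2 <= s1^2 + s2^2 = ||N||_F^2 and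
  s1^4 + s2^4 = ||N||_F^4 - 2 |det N|^2 <= s1^2 ||N||_F^2, which give the two bounds.
*)

lemma norm_Gamma_half_line_square:
  "(cmod (Gamma (1/2 + \<i> * complex_of_real m)))\<^sup>2 = pi / cosh (pi * m)"
proof -
  define w where "w = 1/2 + \<i> * complex_of_real m"
  have conj_w: "cnj w = 1 - w" by (simp add: w_def complex_eq_iff)
  have "sin (complex_of_real pi * w) = cos (\<i> * complex_of_real (pi * m))"
    by (simp add: w_def distrib_left sin_add mult.left_commute)
  also have "\<dots> = complex_of_real ((exp (pi * m) + inverse (exp (pi * m))) / 2)"
    by (rule cosh_real[symmetric])
  also have "\<dots> = complex_of_real (cosh (pi * m))"
    by (simp add: cosh_def exp_minus)
  finally have sin_w: "sin (complex_of_real pi * w) = complex_of_real (cosh (pi * m))" .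
  have "complex_of_real ((cmod (Gamma w))\<^sup>2) = Gamma w * Gamma (1 - w)"
    using cnj_Gamma[of w] by (subst complex_norm_square) (simp add: conj_w)
  also have "\<dots> = complex_of_real (pi / cosh (pi * m))"
    by (simp add: Gamma_reflection_complex sin_w)
  finally show ?thesis unfolding w_def of_real_eq_iff .
qed

lemma norm_Fpm_square: "(cmod (Fpm \<mu>))\<^sup>2 = exp (- pi * \<mu>) / (2 * cosh (pi * \<mu>))"
proof -
  have "cmod (Fpm \<mu>) = 1 / sqrt (2 * pi) * exp (- pi * \<mu> / 2) * cmod (Gamma (1/2 + \<i> * complex_of_real \<mu>))"
    unfolding Fpm_def norm_mult norm_exp_i_times norm_of_real by simp
  then have "(cmod (Fpm \<mu>))\<^sup>2 = exp (- pi * \<mu>) * (pi / cosh (pi * \<mu>)) / (2 * pi)"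
    by (simp add: power_mult_distrib power_divide norm_Gamma_half_line_square exp_double[symmetric])
  then show ?thesis by simp
qed

lemma norm_Fmp_square: "(cmod (Fmp \<mu>))\<^sup>2 = exp (pi * \<mu>) / (2 * cosh (pi * \<mu>))"
proof -
  have "cmod (Fmp \<mu>) = 1 / sqrt (2 * pi) * exp (pi * \<mu> / 2) * cmod (Gamma (1/2 - \<i> * complex_of_real \<mu>))"
    unfolding Fmp_def norm_mult norm_exp_i_times norm_of_real by simp
  moreover have "(cmod (Gamma (1/2 - \<i> * complex_of_real \<mu>)))\<^sup>2 = pi / cosh (pi * \<mu>)"
    using norm_Gamma_half_line_square[of "- \<mu>"] by simp
  ultimately have "(cmod (Fmp \<mu>))\<^sup>2 = exp (pi * \<mu>) * (pi / cosh (pi * \<mu>)) / (2 * pi)"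
    by (simp add: power_mult_distrib power_divide exp_double[symmetric])
  then show ?thesis by simp
qed

lemma norm_Fpm_square_add_norm_Fmp_square: "(cmod (Fpm \<mu>))\<^sup>2 + (cmod (Fmp \<mu>))\<^sup>2 = 1"
proof -
  have "exp (- pi * \<mu>) + exp (pi * \<mu>) = 2 * cosh (pi * \<mu>)"
    by (simp add: cosh_field_def)
  then show ?thesis
    by (simp add: norm_Fpm_square norm_Fmp_square add_divide_distrib[symmetric])
qed

lemma norm_vec2_square: "(norm (x :: complex^2))\<^sup>2 = (cmod (x$1))\<^sup>2 + (cmod (x$2))\<^sup>2"
  by (simp add: norm_vec_def L2_set_def sum_2)

lemma matrix_vector_mult_2: "(N *v (x :: 'a::semiring_1^2)) $ i = N$i$1 * x$1 + N$i$2 * x$2"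
  by (simp add: matrix_vector_mult_def sum_2)

lemma complex_lagrange_identity:
  "((cmod p)\<^sup>2 + (cmod q)\<^sup>2) * ((cmod u)\<^sup>2 + (cmod v)\<^sup>2)
     = (cmod (p * u + q * v))\<^sup>2 + (cmod (p * cnj v - q * cnj u))\<^sup>2"
proof -
  have "complex_of_real (((cmod p)\<^sup>2 + (cmod q)\<^sup>2) * ((cmod u)\<^sup>2 + (cmod v)\<^sup>2))
      = complex_of_real ((cmod (p * u + q * v))\<^sup>2 + (cmod (p * cnj v - q * cnj u))\<^sup>2)"
    by (simp only: of_real_add of_real_mult complex_norm_square complex_cnj_add complex_cnj_mult
        complex_cnj_diff complex_cnj_cnj) algebra
  then show ?thesis by (simp only: of_real_eq_iff)
qed

definition frobenius_sq :: "complex^'n^'m \<Rightarrow> real" where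
  "frobenius_sq N = (\<Sum>i\<in>UNIV. \<Sum>j\<in>UNIV. (cmod (N$i$j))\<^sup>2)"

lemma frobenius_sq_2:
  "frobenius_sq (N :: complex^2^2)
     = (cmod (N$1$1))\<^sup>2 + (cmod (N$1$2))\<^sup>2 + (cmod (N$2$1))\<^sup>2 + (cmod (N$2$2))\<^sup>2"
  by (simp add: frobenius_sq_def sum_2)

lemma norm_matrix_vector_mult_2_square_le:
  "(norm (N *v x))\<^sup>2 \<le> frobenius_sq (N :: complex^2^2) * (norm x)\<^sup>2"
proof -
  have row: "(cmod (N$i$1 * x$1 + N$i$2 * x$2))\<^sup>2
      \<le> ((cmod (N$i$1))\<^sup>2 + (cmod (N$i$2))\<^sup>2) * ((cmod (x$1))\<^sup>2 + (cmod (x$2))\<^sup>2)" for i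
    using complex_lagrange_identity[of "N$i$1" "N$i$2" "x$1" "x$2"] by simp
  show ?thesis
    using row[of 1] row[of 2]
    by (simp add: norm_vec2_square matrix_vector_mult_2 frobenius_sq_2 algebra_simps)
qed

lemma onorm_matrix_2_square_le_frobenius_sq:
  "(onorm (\<lambda>x. N *v x))\<^sup>2 \<le> frobenius_sq (N :: complex^2^2)"
proof -
  have frob_nonneg: "0 \<le> frobenius_sq N" by (simp add: frobenius_sq_2)
  have "onorm (\<lambda>x. N *v x) \<le> sqrt (frobenius_sq N)"
  proof (rule onorm_le)
    fix x
    have "(norm (N *v x))\<^sup>2 \<le> (sqrt (frobenius_sq N) * norm x)\<^sup>2"
      using norm_matrix_vector_mult_2_square_le[of N x] frob_nonneg by (simp add: power_mult_distrib)
    then show "norm (N *v x) \<le> sqrt (frobenius_sq N) * norm x"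
      by (rule power2_le_imp_le) (simp add: frob_nonneg)
  qed
  moreover have "0 \<le> onorm (\<lambda>x. N *v x)"
    by (rule onorm_pos_le) (rule matrix_vector_mul_bounded_linear)
  ultimately show ?thesis
    using frob_nonneg power_mono[of _ _ 2] by fastforce
qed

(* The conjugated rows of N are the columns of N^*, so the left-hand side is ||N N^*||_F^2. *)
lemma norm_matrix_vector_mult_conj_rows_2:
  fixes N :: "complex^2^2"
  shows "(norm (N *v (\<chi> j. cnj (N$1$j))))\<^sup>2 + (norm (N *v (\<chi> j. cnj (N$2$j))))\<^sup>2
           = (frobenius_sq N)\<^sup>2 - 2 * (cmod (det N))\<^sup>2"
proof -
  have norm_gram_diag: "cmod (a * cnj a + b * cnj b) = (cmod a)\<^sup>2 + (cmod b)\<^sup>2" for a b :: complex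
  proof -
    have "a * cnj a + b * cnj b = complex_of_real ((cmod a)\<^sup>2 + (cmod b)\<^sup>2)"
      by (simp only: of_real_add complex_norm_square)
    then show ?thesis by (simp only: norm_of_real) simp
  qed
  have norm_gram_offdiag: "cmod (r * cnj p + s * cnj q) = cmod (p * cnj r + q * cnj s)" for p q r s :: complex
  proof -
    have "r * cnj p + s * cnj q = cnj (p * cnj r + q * cnj s)" by simp
    then show ?thesis by (simp only: complex_mod_cnj)
  qed
  have rows: "((cmod p)\<^sup>2 + (cmod q)\<^sup>2) * ((cmod r)\<^sup>2 + (cmod s)\<^sup>2)
      = (cmod (p * cnj r + q * cnj s))\<^sup>2 + (cmod (p * s - q * r))\<^sup>2" for p q r s :: complex
    using complex_lagrange_identity[of p q "cnj r" "cnj s"] by simp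
  have gram: "(cmod (p * cnj p + q * cnj q))\<^sup>2 + (cmod (r * cnj p + s * cnj q))\<^sup>2
      + (cmod (p * cnj r + q * cnj s))\<^sup>2 + (cmod (r * cnj r + s * cnj s))\<^sup>2
      = ((cmod p)\<^sup>2 + (cmod q)\<^sup>2 + (cmod r)\<^sup>2 + (cmod s)\<^sup>2)\<^sup>2 - 2 * (cmod (p * s - q * r))\<^sup>2"
    for p q r s :: complex
    unfolding norm_gram_diag norm_gram_offdiag using rows[of p q r s]
    by (simp add: power2_eq_square algebra_simps)
  show ?thesis
    using gram[of "N$1$1" "N$1$2" "N$2$1" "N$2$2"]
    by (simp add: norm_vec2_square matrix_vector_mult_2 frobenius_sq_2 det_2)
qed

lemma frobenius_sq_minus_det_le_onorm_matrix_2_square: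
  fixes N :: "complex^2^2"
  shows "frobenius_sq N - 2 * (cmod (det N))\<^sup>2 / frobenius_sq N \<le> (onorm (\<lambda>x. N *v x))\<^sup>2"
proof (cases "frobenius_sq N = 0")
  case True
  then show ?thesis by simp
next
  case False
  then have frob_pos: "frobenius_sq N > 0"
    by (simp add: frobenius_sq_2 order_neq_le_trans)
  define L where "L = onorm (\<lambda>x. N *v x)"
  have bound: "(norm (N *v x))\<^sup>2 \<le> L\<^sup>2 * (norm x)\<^sup>2" for x
  proof -
    have "norm (N *v x) \<le> L * norm x"
      unfolding L_def by (rule onorm[OF matrix_vector_mul_bounded_linear])
    then show ?thesis
      by (metis norm_ge_zero power_mono power_mult_distrib)
  qed
  define x1 :: "complex^2" where "x1 = (\<chi> j. cnj (N$1$j))"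
  define x2 :: "complex^2" where "x2 = (\<chi> j. cnj (N$2$j))"
  have "(frobenius_sq N)\<^sup>2 - 2 * (cmod (det N))\<^sup>2 = (norm (N *v x1))\<^sup>2 + (norm (N *v x2))\<^sup>2"
    unfolding x1_def x2_def norm_matrix_vector_mult_conj_rows_2 ..
  also have "\<dots> \<le> L\<^sup>2 * ((norm x1)\<^sup>2 + (norm x2)\<^sup>2)"
    using bound[of x1] bound[of x2] by (simp add: distrib_left)
  also have "(norm x1)\<^sup>2 + (norm x2)\<^sup>2 = frobenius_sq N"
    by (simp add: norm_vec2_square frobenius_sq_2 x1_def x2_def)
  finally have "(frobenius_sq N)\<^sup>2 - 2 * (cmod (det N))\<^sup>2 \<le> L\<^sup>2 * frobenius_sq N" .
  moreover have "frobenius_sq N - 2 * (cmod (det N))\<^sup>2 / frobenius_sq N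
      = ((frobenius_sq N)\<^sup>2 - 2 * (cmod (det N))\<^sup>2) / frobenius_sq N"
    using frob_pos by (simp add: diff_divide_distrib power2_eq_square)
  ultimately show ?thesis
    using frob_pos by (simp add: L_def pos_divide_le_eq)
qed

lemma matrix_inv_eqI:
  fixes A B :: "'a::semiring_1^'n^'n"
  assumes "A ** B = mat 1" and "B ** A = mat 1"
  shows "matrix_inv A = B"
  unfolding matrix_inv_def
proof (rule some_equality)
  show "A ** B = mat 1 \<and> B ** A = mat 1" using assms by blast
next
  fix C assume "A ** C = mat 1 \<and> C ** A = mat 1"
  then have "C ** A = mat 1" by blast
  then show "C = B" by (metis assms(1) matrix_mul_assoc matrix_mul_lid matrix_mul_rid)
qed

lemma matrix_inv_2:
  fixes A :: "'a::field^2^2"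
  assumes "det A \<noteq> 0"
  shows "matrix_inv A = vector [vector [A$2$2 / det A, - A$1$2 / det A],
                               vector [- A$2$1 / det A, A$1$1 / det A]]"
    (is "_ = ?N")
proof (rule matrix_inv_eqI)
  have det_A: "A$1$1 * A$2$2 - A$1$2 * A$2$1 = det A"
    by (simp add: det_2)
  show "A ** ?N = mat 1"
    using assms det_A
    by (simp add: vec_eq_iff forall_2 matrix_matrix_mult_def sum_2 mat_def field_simps)
  show "?N ** A = mat 1"
    using assms det_A
    by (simp add: vec_eq_iff forall_2 matrix_matrix_mult_def sum_2 mat_def field_simps)
qed

lemma det_matrix_inv_2:
  fixes A :: "'a::field^2^2"
  assumes "det A \<noteq> 0"
  shows "det (matrix_inv A) = 1 / det A"
proof -
  have "det (matrix_inv A) = (A$1$1 * A$2$2 - A$1$2 * A$2$1) / (det A * det A)"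
    by (subst det_2) (simp add: matrix_inv_2[OF assms] diff_divide_distrib mult_ac)
  also have "\<dots> = 1 / det A"
    using assms by (simp add: det_2[of A, symmetric])
  finally show ?thesis .
qed

lemma frobenius_sq_matrix_inv_2:
  fixes A :: "complex^2^2"
  assumes "det A \<noteq> 0"
  shows "frobenius_sq (matrix_inv A) = frobenius_sq A / (cmod (det A))\<^sup>2"
  unfolding matrix_inv_2[OF assms] frobenius_sq_2
  by (simp add: norm_divide power_divide add_divide_distrib)

theorem lemma4p6:
  fixes \<mu> :: real and z :: complex
  assumes "\<mu> \<ge> 0" and "z \<notin> mat_spectrum (Fmat \<mu>)"
  shows "(2 * (cmod z)\<^sup>2 + 1) / (cmod (Dfun z \<mu>))\<^sup>2 - 2 / (2 * (cmod z)\<^sup>2 + 1)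
           \<le> (onorm (\<lambda>x. matrix_inv (mat z - Fmat \<mu>) *v x))\<^sup>2
       \<and> (onorm (\<lambda>x. matrix_inv (mat z - Fmat \<mu>) *v x))\<^sup>2
           \<le> (2 * (cmod z)\<^sup>2 + 1) / (cmod (Dfun z \<mu>))\<^sup>2"
proof -
  \<comment> \<open>The bounds hold for every real \<mu>.\<close>
  define M where "M = mat z - Fmat \<mu>"
  define G where "G = 2 * (cmod z)\<^sup>2 + 1"
  have det_M: "det M \<noteq> 0"
    using assms(2) by (simp add: mat_spectrum_def M_def invertible_det_nz)
  have "frobenius_sq M = G"
    using norm_Fpm_square_add_norm_Fmp_square[of \<mu>]
    by (simp add: frobenius_sq_2 M_def Fmat_def mat_def G_def)
  then have frob: "frobenius_sq (matrix_inv M) = G / (cmod (det M))\<^sup>2"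
    using det_M by (simp add: frobenius_sq_matrix_inv_2)
  have "frobenius_sq (matrix_inv M) - 2 * (cmod (det (matrix_inv M)))\<^sup>2 / frobenius_sq (matrix_inv M)
      = G / (cmod (det M))\<^sup>2 - 2 / G"
    using det_M by (simp add: frob det_matrix_inv_2 norm_divide power_divide)
  then have lower: "G / (cmod (det M))\<^sup>2 - 2 / G \<le> (onorm (\<lambda>x. matrix_inv M *v x))\<^sup>2"
    using frobenius_sq_minus_det_le_onorm_matrix_2_square[of "matrix_inv M"] by simp
  have upper: "(onorm (\<lambda>x. matrix_inv M *v x))\<^sup>2 \<le> G / (cmod (det M))\<^sup>2"
    using onorm_matrix_2_square_le_frobenius_sq[of "matrix_inv M"] by (simp add: frob)
  show ?thesis
    using lower upper by (simp add: G_def M_def Dfun_def)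
qed

end
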